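(* Let $n$ be a positive integer and let $a,b$ be distinct integers with $0<a,b<n$, so that $G=C_{2n}(a,b,n)$ is a $5$-regular circulant graph. If $3$ divides none of the integers $a$, $b$, $2n-a$, $2n-b$, $n$, then $G$ is word-representable.
   Context: Two distinct letters $x,y$ alternate in a word $w$ if, after deleting all other letters from $w$, the resulting word is of the form $xyxy\cdots$ or $yxyx\cdots$ (of even or odd length). A graph $G=(V,E)$ is word-representable if there is a word $w$ over the alphabet $V$, containing every letter of $V$ at least once, such that for all distinct $x,y\in V$, $xy\in E$ if and only if $x$ and $y$ alternate in $w$. For an integer $m$ and a set $R$ of positive integers each at most $m/2$, the circulant graph $C_m(R)$ has vertex set $\{0,1,\dots,m-1\}$, with $i$ and $j$ adjacent iff $\min(|i-j|,\,m-|i-j|)\in R$. $C_{2n}(a,b,n)$ denotes the circulant graph on $2n$ vertices with jump set $\{a,b,n\}$. *)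

theory Defs
  imports Main
begin

definition alternate :: "'a list \<Rightarrow> 'a \<Rightarrow> 'a \<Rightarrow> bool" where
  "alternate w x y \<longleftrightarrow>
     (let u = filter (\<lambda>z. z = x \<or> z = y) w in
        \<forall>i. Suc i < length u \<longrightarrow> u ! i \<noteq> u ! Suc i)"

definition word_representable :: "'a set \<Rightarrow> ('a \<Rightarrow> 'a \<Rightarrow> bool) \<Rightarrow> bool" where
  "word_representable V E \<longleftrightarrow>
     (\<exists>w. set w = V \<and>
        (\<forall>x\<in>V. \<forall>y\<in>V. x \<noteq> y \<longrightarrow> (E x y \<longleftrightarrow> alternate w x y)))"

definition circ_vertices :: "nat \<Rightarrow> nat set" where
  "circ_vertices m = {0..<m}"

definition circ_adj :: "nat \<Rightarrow> nat set \<Rightarrow> nat \<Rightarrow> nat \<Rightarrow> bool" where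
  "circ_adj m R i j \<longleftrightarrow>
     (let d = (if i \<le> j then j - i else i - j) in min d (m - d) \<in> R)"

end

theory Submission
  imports Defs
begin

(* Let c be a proper 3-colouring with colour classes B0, B1, B2 and put P = B0 B1 B2.  In P two
   vertices of different colours occur once each, lower colour first, so they alternate in every
   power of P.  The word starts with rev B0 rev B1 rev B2 P, which shows two vertices u, v of the
   same colour as v u u v.  Then, for every non-edge {x, y} with c y = c x + 1 (mod 3), a copy of
   P P follows in which x and y are moved to the border between their colour blocks (each only
   past vertices of its own colour) and swapped there: this breaks the alternation of x and y
   and of no other pair.  The circulant C_2n(a, b, n) is properly 3-coloured by v mod 3, since
   3 divides neither a jump r nor 2n - r. *)

lemma alternate_iff_distinct_adj:
  "alternate w x y \<longleftrightarrow> distinct_adj (filter (\<lambda>z. z = x \<or> z = y) w)"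
  by (simp add: alternate_def Let_def distinct_adj_conv_nth)

lemma alternate_commute: "alternate w x y \<longleftrightarrow> alternate w y x"
  by (simp add: alternate_iff_distinct_adj disj_commute)

lemma alternate_infixD: "alternate (xs @ ys @ zs) x y \<Longrightarrow> alternate ys x y"
  by (auto simp: alternate_iff_distinct_adj)

lemma distinct_adj_concat_replicate:
  "p \<noteq> q \<Longrightarrow> distinct_adj (concat (replicate k [p, q]))"
proof (induction k)
  case (Suc k)
  then show ?case by (cases k) (auto simp: distinct_adj_Cons)
qed simp

lemma filter_removeAll: "filter P (removeAll x xs) = removeAll x (filter P xs)"
  by (simp add: removeAll_filter_not_eq conj_commute)

lemma filter_eq_singleton_if_distinct:
  "distinct xs \<Longrightarrow> u \<in> set xs \<Longrightarrow> filter (\<lambda>z. z = u) xs = [u]"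
  by (induction xs) (auto simp: filter_empty_conv)

lemma less_3_cases: "(k::nat) < 3 \<Longrightarrow> k = 0 \<or> k = 1 \<or> k = 2"
  by auto

definition colour_block :: "'a list \<Rightarrow> ('a \<Rightarrow> nat) \<Rightarrow> nat \<Rightarrow> 'a list" where
  "colour_block vs c k = filter (\<lambda>z. c z = k) vs"

definition colour_layers :: "'a list \<Rightarrow> ('a \<Rightarrow> nat) \<Rightarrow> 'a list" where
  "colour_layers vs c = colour_block vs c 0 @ colour_block vs c 1 @ colour_block vs c 2"

definition reversed_colour_layers :: "'a list \<Rightarrow> ('a \<Rightarrow> nat) \<Rightarrow> 'a list" where
  "reversed_colour_layers vs c =
     rev (colour_block vs c 0) @ rev (colour_block vs c 1) @ rev (colour_block vs c 2)"

lemma set_colour_layers: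
  assumes "\<And>v. v \<in> set vs \<Longrightarrow> c v < 3"
  shows "set (colour_layers vs c) = set vs"
  using assms[THEN less_3_cases] by (fastforce simp: colour_layers_def colour_block_def)

lemma set_reversed_colour_layers:
  "set (reversed_colour_layers vs c) = set (colour_layers vs c)"
  by (auto simp: reversed_colour_layers_def colour_layers_def)

lemma filter_pair_colour_block:
  assumes "distinct vs" "u \<in> set vs" "v \<in> set vs" "c u \<noteq> c v"
  shows "filter (\<lambda>z. z = u \<or> z = v) (colour_block vs c k) =
    (if c u = k then [u] else []) @ (if c v = k then [v] else [])"
proof -
  have "filter (\<lambda>z. z = u \<or> z = v) (colour_block vs c k) =
      filter (\<lambda>z. (c u = k \<and> z = u) \<or> (c v = k \<and> z = v)) vs"
    unfolding colour_block_def by (auto intro: filter_cong)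
  then show ?thesis
    using assms by (auto simp: filter_eq_singleton_if_distinct filter_empty_conv)
qed

lemma filter_pair_colour_layers:
  assumes "distinct vs" "u \<in> set vs" "v \<in> set vs" "c u < c v" "c v < 3"
  shows "filter (\<lambda>z. z = u \<or> z = v) (colour_layers vs c) = [u, v]"
    and "filter (\<lambda>z. z = u \<or> z = v) (reversed_colour_layers vs c) = [u, v]"
  using assms less_3_cases[of "c u"] less_3_cases[of "c v"]
  by (auto simp: colour_layers_def reversed_colour_layers_def filter_pair_colour_block
      rev_filter[symmetric] simp del: filter_filter)

lemma not_alternate_same_colour:
  assumes "distinct vs" "u \<in> set vs" "c u = c v" "c u < 3"
  shows "\<not> alternate (reversed_colour_layers vs c @ colour_layers vs c) u v"
proof -
  define s where "s = filter (\<lambda>z. z = u \<or> z = v) (colour_block vs c (c u))"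
  have other_blocks: "filter (\<lambda>z. z = u \<or> z = v) (colour_block vs c k) = []" if "k \<noteq> c u" for k
    using that assms(3) by (auto simp: colour_block_def filter_empty_conv)
  have "filter (\<lambda>z. z = u \<or> z = v) (reversed_colour_layers vs c @ colour_layers vs c) = rev s @ s"
    using less_3_cases[OF assms(4)] other_blocks
    by (auto simp: s_def colour_layers_def reversed_colour_layers_def rev_filter[symmetric]
        simp del: filter_filter)
  moreover have "s \<noteq> []"
    using assms(2) by (auto simp: s_def colour_block_def filter_empty_conv)
  ultimately show ?thesis
    by (simp add: alternate_iff_distinct_adj distinct_adj_append_iff last_rev)
qed

(* For c x = 2 the border between the blocks of x and y lies between the two copies of P. *)
definition swap_gadget :: "'a list \<Rightarrow> ('a \<Rightarrow> nat) \<Rightarrow> 'a \<Rightarrow> 'a \<Rightarrow> 'a list" where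
  "swap_gadget vs c x y =
    (let B = colour_block vs c in
     if c x = 0 then removeAll x (B 0) @ [y, x] @ removeAll y (B 1) @ B 2 @ colour_layers vs c
     else if c x = 1 then B 0 @ removeAll x (B 1) @ [y, x] @ removeAll y (B 2) @ colour_layers vs c
     else B 0 @ B 1 @ removeAll x (B 2) @ [y, x] @ removeAll y (B 0) @ B 1 @ B 2)"

lemma set_swap_gadget_subset:
  "x \<in> set vs \<Longrightarrow> y \<in> set vs \<Longrightarrow> set (swap_gadget vs c x y) \<subseteq> set vs"
  by (auto simp: swap_gadget_def colour_layers_def colour_block_def Let_def)

lemma filter_pair_swap_gadget:
  assumes "distinct vs" "u \<in> set vs" "v \<in> set vs" "c u < c v" "c v < 3"
    and "c x < 3" "c y = Suc (c x) mod 3" "{u, v} \<noteq> {x, y}"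
  shows "filter (\<lambda>z. z = u \<or> z = v) (swap_gadget vs c x y) = [u, v, u, v]"
  using assms less_3_cases[of "c u"] less_3_cases[of "c v"] less_3_cases[of "c x"]
  by (auto simp: swap_gadget_def Let_def filter_removeAll filter_pair_colour_block
      filter_pair_colour_layers simp del: filter_filter)

lemma not_alternate_swap_gadget:
  assumes "distinct vs" "x \<in> set vs" "y \<in> set vs" "c x < 3" "c y = Suc (c x) mod 3"
  shows "\<not> alternate (swap_gadget vs c x y) x y"
proof -
  have "c x \<noteq> c y"
    using assms(5) by presburger
  then have "filter (\<lambda>z. z = x \<or> z = y) (swap_gadget vs c x y) \<in> {[y, x, x, y], [y, y, x, x]}"
    using less_3_cases[OF assms(4)] assms
    by (elim disjE) (simp_all add: swap_gadget_def Let_def colour_layers_def filter_removeAll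
        filter_pair_colour_block del: filter_filter)
  then show ?thesis
    by (auto simp: alternate_iff_distinct_adj)
qed

definition swap_pairs ::
    "'a list \<Rightarrow> ('a \<Rightarrow> nat) \<Rightarrow> ('a \<Rightarrow> 'a \<Rightarrow> bool) \<Rightarrow> ('a \<times> 'a) list" where
  "swap_pairs vs c E = [(x, y) \<leftarrow> List.product vs vs. c y = Suc (c x) mod 3 \<and> \<not> E x y]"

definition three_colour_word ::
    "'a list \<Rightarrow> ('a \<Rightarrow> nat) \<Rightarrow> ('a \<Rightarrow> 'a \<Rightarrow> bool) \<Rightarrow> 'a list" where
  "three_colour_word vs c E =
     reversed_colour_layers vs c @ colour_layers vs c @
     concat (map (\<lambda>(x, y). swap_gadget vs c x y) (swap_pairs vs c E))"

lemma set_three_colour_word: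
  assumes "\<And>v. v \<in> set vs \<Longrightarrow> c v < 3"
  shows "set (three_colour_word vs c E) = set vs"
  using set_swap_gadget_subset[of _ vs _ c]
  by (auto simp: three_colour_word_def swap_pairs_def set_reversed_colour_layers set_colour_layers[OF assms])

lemma not_alternate_three_colour_word_same_colour:
  assumes "distinct vs" "u \<in> set vs" "c u = c v" "c u < 3"
  shows "\<not> alternate (three_colour_word vs c E) u v"
proof
  assume "alternate (three_colour_word vs c E) u v"
  then have "alternate ([] @ (reversed_colour_layers vs c @ colour_layers vs c) @
      concat (map (\<lambda>(x, y). swap_gadget vs c x y) (swap_pairs vs c E))) u v"
    by (simp add: three_colour_word_def)
  then show False
    using not_alternate_same_colour[OF assms] by (blast dest: alternate_infixD)
qed

lemma alternate_three_colour_word_edge: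
  assumes "distinct vs" "u \<in> set vs" "v \<in> set vs" "c u < c v"
    and "\<And>x. x \<in> set vs \<Longrightarrow> c x < 3" and "E u v" "E v u"
  shows "alternate (three_colour_word vs c E) u v"
proof -
  have gadgets: "filter (\<lambda>z. z = u \<or> z = v) (swap_gadget vs c x y) = [u, v, u, v]"
    if "(x, y) \<in> set (swap_pairs vs c E)" for x y
  proof (rule filter_pair_swap_gadget)
    show "{u, v} \<noteq> {x, y}"
      using that assms(6,7) by (auto simp: swap_pairs_def doubleton_eq_iff)
  qed (use that assms in \<open>auto simp: swap_pairs_def\<close>)
  have concat_gadgets: "concat (map (\<lambda>_. [u, v, u, v]) l) = concat (replicate (2 * length l) [u, v])"
    for l :: "('a \<times> 'a) list"
    by (induction l) auto
  have "filter (\<lambda>z. z = u \<or> z = v) (three_colour_word vs c E) =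
      concat (replicate (2 + 2 * length (swap_pairs vs c E)) [u, v])"
    using assms gadgets
    by (simp add: three_colour_word_def filter_pair_colour_layers
        filter_concat case_prod_beta concat_gadgets[symmetric] cong: map_cong)
  moreover have "u \<noteq> v"
    using assms(4) by blast
  ultimately show ?thesis
    using distinct_adj_concat_replicate by (simp only: alternate_iff_distinct_adj)
qed

lemma not_alternate_three_colour_word_non_edge:
  assumes "distinct vs" "u \<in> set vs" "v \<in> set vs" "c u < c v"
    and "\<And>x. x \<in> set vs \<Longrightarrow> c x < 3" and "\<not> E u v" "\<not> E v u"
  shows "\<not> alternate (three_colour_word vs c E) u v"
proof
  assume alt: "alternate (three_colour_word vs c E) u v"
  have gadget_alternates: "alternate (swap_gadget vs c x y) u v"
    if member: "(x, y) \<in> set (swap_pairs vs c E)" for x y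
  proof -
    obtain l1 l2 where "swap_pairs vs c E = l1 @ (x, y) # l2"
      using split_list[OF member] by blast
    then have "three_colour_word vs c E =
        (reversed_colour_layers vs c @ colour_layers vs c @
          concat (map (\<lambda>(x, y). swap_gadget vs c x y) l1)) @
        swap_gadget vs c x y @ concat (map (\<lambda>(x, y). swap_gadget vs c x y) l2)"
      by (simp add: three_colour_word_def)
    then show ?thesis
      using alt alternate_infixD by metis
  qed
  have gadget_breaks: "\<not> alternate (swap_gadget vs c x y) x y" if "(x, y) \<in> set (swap_pairs vs c E)" for x y
    using that assms(5)[of x] not_alternate_swap_gadget[OF assms(1), of x y]
    by (simp add: swap_pairs_def)
  have "c v = Suc (c u) mod 3 \<or> c u = Suc (c v) mod 3"
    using assms(4) assms(5)[OF assms(3)] less_3_cases[of "c u"] less_3_cases[of "c v"] by auto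
  then have "(u, v) \<in> set (swap_pairs vs c E) \<or> (v, u) \<in> set (swap_pairs vs c E)"
    using assms by (auto simp: swap_pairs_def)
  then show False
    using gadget_alternates gadget_breaks by (metis alternate_commute)
qed

theorem word_representable_if_proper_3_colouring:
  fixes V :: "'a set" and E :: "'a \<Rightarrow> 'a \<Rightarrow> bool" and c :: "'a \<Rightarrow> nat"
  assumes "finite V"
    and sym: "\<And>x y. x \<in> V \<Longrightarrow> y \<in> V \<Longrightarrow> E x y \<longleftrightarrow> E y x"
    and colours: "\<And>x. x \<in> V \<Longrightarrow> c x < 3"
    and proper: "\<And>x y. x \<in> V \<Longrightarrow> y \<in> V \<Longrightarrow> x \<noteq> y \<Longrightarrow> E x y \<Longrightarrow> c x \<noteq> c y"
  shows "word_representable V E"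
proof -
  obtain vs where vs: "distinct vs" "set vs = V"
    using finite_distinct_list[OF assms(1)] by blast
  define w where "w = three_colour_word vs c E"
  have ordered: "E x y \<longleftrightarrow> alternate w x y"
    if xy: "x \<in> V" "y \<in> V" "x \<noteq> y" and le: "c x \<le> c y" for x y
  proof (cases "c x = c y")
    case True
    then show ?thesis
      using proper[OF xy] not_alternate_three_colour_word_same_colour[of vs x c y E] xy vs colours
      by (auto simp: w_def)
  next
    case False
    with le have "c x < c y" by simp
    then show ?thesis
      using alternate_three_colour_word_edge[of vs x y c E] sym[OF xy(1,2)]
        not_alternate_three_colour_word_non_edge[of vs x y c E] xy vs colours
      by (auto simp: w_def)
  qed
  have "E x y \<longleftrightarrow> alternate w x y" if "x \<in> V" "y \<in> V" "x \<noteq> y" for x y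
  proof (cases "c x \<le> c y")
    case False
    then show ?thesis
      using ordered[of y x] that sym[OF that(1,2)] alternate_commute[of w x y] by auto
  qed (use ordered that in blast)
  moreover have "set w = V"
    using set_three_colour_word[of vs c E] vs colours by (simp add: w_def)
  ultimately show ?thesis
    unfolding word_representable_def by blast
qed

lemma circ_adj_imp_mod_neq:
  fixes m k x y :: nat
  assumes "circ_adj m R x y" "x < m" "y < m"
    and "\<And>r. r \<in> R \<Longrightarrow> \<not> k dvd r \<and> \<not> k dvd (m - r)"
  shows "x mod k \<noteq> y mod k"
proof
  define d where "d = (if x \<le> y then y - x else x - y)"
  assume "x mod k = y mod k"
  then have "k dvd d"
    using mod_eq_dvd_iff_nat[of x y k] mod_eq_dvd_iff_nat[of y x k] by (auto simp: d_def)
  moreover have "d \<le> m"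
    using assms(2,3) by (auto simp: d_def)
  moreover have "min d (m - d) \<in> R"
    using assms(1) unfolding circ_adj_def d_def Let_def .
  ultimately show False
    using assms(4)[of d] assms(4)[of "m - d"] by (auto simp: min_def split: if_splits)
qed

theorem theorem20:
  fixes n a b :: nat
  assumes "0 < n" and "a \<noteq> b"
    and "0 < a" and "a < n" and "0 < b" and "b < n"
    and "\<not> 3 dvd a" and "\<not> 3 dvd b" and "\<not> 3 dvd (2*n - a)"
    and "\<not> 3 dvd (2*n - b)" and "\<not> 3 dvd n"
  shows "word_representable (circ_vertices (2*n)) (circ_adj (2*n) {a, b, n})"
  unfolding circ_vertices_def
proof (rule word_representable_if_proper_3_colouring[where c = "\<lambda>v. v mod 3"])
  show "x mod 3 \<noteq> y mod 3"
    if "x \<in> {0..<2*n}" "y \<in> {0..<2*n}" "circ_adj (2*n) {a, b, n} x y" for x y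
  proof (rule circ_adj_imp_mod_neq)
    show "\<not> 3 dvd r \<and> \<not> 3 dvd (2*n - r)" if "r \<in> {a, b, n}" for r
      using that assms(7-11) by auto
  qed (use that in auto)
qed (auto simp: circ_adj_def Let_def)

end
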